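(* Let $\langle X\mid R\rangle$ be a side-confluent $N$-homogeneous presentation with operator $S$. For every integer $m$ with $N+1\leq m\leq 2N-1$, writing $S_1=\mathrm{id}_{V^{\otimes m-N}}\otimes S$ and $S_2=S\otimes\mathrm{id}_{V^{\otimes m-N}}$, there exists an integer $k$ such that $$\langle\mathrm{id}_{V^{\otimes m}}-S_1,\mathrm{id}_{V^{\otimes m}}-S_2\rangle^k=\langle\mathrm{id}_{V^{\otimes m}}-S_2,\mathrm{id}_{V^{\otimes m}}-S_1\rangle^k.$$ Moreover, for every $w\in X^{(m)}$ such that $S_1(w)\neq w$ and $S_2(w)\neq w$, we have $\mathrm{lm}\left(\langle\mathrm{id}_{V^{\otimes m}}-S_1,\mathrm{id}_{V^{\otimes m}}-S_2\rangle^k(w)\right)=w$.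
   Context: $\mathbb{K}$ is a field, $N\geq2$. $X^{(m)}$ is the set of words of length $m$ on $X$, $V=\mathbb{K}X$, $V^{\otimes m}=\mathbb{K}X^{(m)}$. An $N$-homogeneous presentation $\langle X\mid R\rangle$: $R\subset V^{\otimes N}$. $X$ is totally ordered, $X^{(m)}$ lexicographically ordered, $\mathrm{lm}(f)$ is the greatest word occurring in $f\neq0$. Conventions: each $f\in R$ has coefficient $1$ on $\mathrm{lm}(f)$; a word is a normal form if it has no factor $\mathrm{lm}(f)$, $f\in R$; the presentation is reduced ($\mathrm{lm}(f)-f$ is a combination of normal-form words, and $\mathrm{lm}(f)$ has no factor $\mathrm{lm}(g)$, $g\in R\setminus\{f\}$). The operator of the presentation is $S\in\mathrm{End}(V^{\otimes N})$, $S(\mathrm{lm}(f))=\mathrm{lm}(f)-f$ for $f\in R$, $S(w)=w$ for other words. For endomorphisms $s,t$, $\langle t,s\rangle^k$ denotes $\cdots sts$ with $k$ factors. Side-confluent: for each $1\leq m\leq N-1$ some $k$ satisfies $\langle\mathrm{id}_{V^{\otimes m}}\otimes S,S\otimes\mathrm{id}_{V^{\otimes m}}\rangle^k=\langle S\otimes\mathrm{id}_{V^{\otimes m}},\mathrm{id}_{V^{\otimes m}}\otimes S\rangle^k$. *)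

theory Defs
  imports Main "HOL-Library.List_Lexorder" "HOL-Library.Sublist"
begin

text \<open>Words over X are lists of the type 'x (X = UNIV). Elements of the tensor powers
  V^{\<otimes>m} = K X^(m) are finitely supported functions from words to the field,
  supported on words of length m. Words are compared lexicographically
  (List_Lexorder), which is the lexicographic order on X^(m).\<close>

type_synonym ('x, 'k) vec = "'x list \<Rightarrow> 'k"

definition supp :: "('x, 'k::zero) vec \<Rightarrow> 'x list set" where
  "supp v = {w. v w \<noteq> 0}"

definition tens :: "nat \<Rightarrow> ('x, 'k::zero) vec set" where
  "tens m = {v. finite (supp v) \<and> (\<forall>w\<in>supp v. length w = m)}"

definition wvec :: "'x list \<Rightarrow> ('x, 'k::{zero,one}) vec" where
  "wvec w = (\<lambda>u. if u = w then 1 else 0)"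

definition lm :: "('x::linorder, 'k::zero) vec \<Rightarrow> 'x list" where
  "lm f = Max (supp f)"

definition lin :: "('x list \<Rightarrow> ('x, 'k::comm_semiring_1) vec) \<Rightarrow> ('x, 'k) vec \<Rightarrow> ('x, 'k) vec" where
  "lin T v = (\<lambda>u. \<Sum>w\<in>supp v. v w * T w u)"

definition normal_form :: "('x::linorder, 'k::zero) vec set \<Rightarrow> 'x list \<Rightarrow> bool" where
  "normal_form R w \<longleftrightarrow> (\<forall>f\<in>R. \<not> sublist (lm f) w)"

definition reduced_presentation :: "nat \<Rightarrow> ('x::linorder, 'k::field) vec set \<Rightarrow> bool" where
  "reduced_presentation N R \<longleftrightarrow>
     R \<subseteq> tens N \<and>
     (\<forall>f\<in>R. supp f \<noteq> {} \<and> f (lm f) = 1) \<and>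
     (\<forall>f\<in>R. \<forall>w\<in>supp (\<lambda>u. wvec (lm f) u - f u). normal_form R w) \<and>
     (\<forall>f\<in>R. \<forall>g\<in>R - {f}. \<not> sublist (lm g) (lm f))"

definition opw :: "('x::linorder, 'k::field) vec set \<Rightarrow> 'x list \<Rightarrow> ('x, 'k) vec" where
  "opw R w = (if \<exists>f\<in>R. lm f = w
              then (\<lambda>u. wvec w u - (THE f. f \<in> R \<and> lm f = w) u)
              else wvec w)"

text \<open>Concatenation of a word with a vector on the left / right (a \<otimes> v, v \<otimes> b).\<close>
definition lcat :: "'x list \<Rightarrow> ('x, 'k::zero) vec \<Rightarrow> ('x, 'k) vec" where
  "lcat a v = (\<lambda>u. if prefix a u then v (drop (length a) u) else 0)"

definition rcat :: "('x, 'k::zero) vec \<Rightarrow> 'x list \<Rightarrow> ('x, 'k) vec" where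
  "rcat v b = (\<lambda>u. if suffix b u then v (take (length u - length b) u) else 0)"

text \<open>id_{V^{\<otimes>m}} \<otimes> T and T \<otimes> id_{V^{\<otimes>m}}, on words.\<close>
definition tensL :: "nat \<Rightarrow> ('x list \<Rightarrow> ('x, 'k::zero) vec) \<Rightarrow> 'x list \<Rightarrow> ('x, 'k) vec" where
  "tensL m T w = lcat (take m w) (T (drop m w))"

definition tensR :: "nat \<Rightarrow> ('x list \<Rightarrow> ('x, 'k::zero) vec) \<Rightarrow> 'x list \<Rightarrow> ('x, 'k) vec" where
  "tensR m T w = rcat (T (take (length w - m) w)) (drop (length w - m) w)"

text \<open>alt t s k = <t,s>^k = ... s t s  (k factors, rightmost s).\<close>
fun alt :: "('a \<Rightarrow> 'a) \<Rightarrow> ('a \<Rightarrow> 'a) \<Rightarrow> nat \<Rightarrow> 'a \<Rightarrow> 'a" where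
  "alt t s 0 = id"
| "alt t s (Suc k) = (if even k then s else t) \<circ> alt t s k"

definition side_confluent :: "nat \<Rightarrow> ('x::linorder, 'k::field) vec set \<Rightarrow> bool" where
  "side_confluent N R \<longleftrightarrow>
     (\<forall>m. 1 \<le> m \<and> m \<le> N - 1 \<longrightarrow>
        (\<exists>k\<ge>1. \<forall>v\<in>tens (m + N).
            alt (lin (tensL m (opw R))) (lin (tensR m (opw R))) k v
          = alt (lin (tensR m (opw R))) (lin (tensL m (opw R))) k v))"

end

theory Submission
  imports Defs "HOL-Library.Function_Algebras"
begin

(* For idempotent additive maps t and s, expanding the alternating product of the complements
   1 - t and 1 - s and collapsing repeated factors gives, for k >= 1,
     <1-t, 1-s>^k = 1 + (SUM 0<j<k. (-1)^j (<t,s>^j + <s,t>^j)) + (-1)^k <t,s>^k,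
   in which only the last term is not symmetric in t and s; hence the side-confluence relation
   <S1,S2>^k = <S2,S1>^k transfers to the complements.
   For the leading terms: S1 and S2 send a word to a combination of words that are not larger,
   and a word they do not fix to a combination of strictly smaller words, so neither id - S1 nor
   id - S2 can remove or overtake a leading word that both of them move. *)

definition signed :: "nat \<Rightarrow> 'v::ab_group_add \<Rightarrow> 'v" where
  "signed k y = (if even k then y else - y)"

lemma signed_0 [simp]: "signed 0 y = y"
  by (simp add: signed_def)

lemma signed_Suc [simp]: "signed (Suc k) y = - signed k y"
  by (simp add: signed_def)

locale idempotent_pair =
  fixes V :: "'v::ab_group_add set" and t s :: "'v \<Rightarrow> 'v"
  assumes zero_mem: "0 \<in> V" and diff_mem: "x \<in> V \<Longrightarrow> y \<in> V \<Longrightarrow> x - y \<in> V"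
    and t_mem: "x \<in> V \<Longrightarrow> t x \<in> V" and s_mem: "x \<in> V \<Longrightarrow> s x \<in> V"
    and t_diff: "x \<in> V \<Longrightarrow> y \<in> V \<Longrightarrow> t (x - y) = t x - t y"
    and s_diff: "x \<in> V \<Longrightarrow> y \<in> V \<Longrightarrow> s (x - y) = s x - s y"
    and t_idem: "x \<in> V \<Longrightarrow> t (t x) = t x"
    and s_idem: "x \<in> V \<Longrightarrow> s (s x) = s x"
begin

lemma swap: "idempotent_pair V s t"
  by unfold_locales (auto intro: zero_mem diff_mem t_mem s_mem t_diff s_diff t_idem s_idem)

(* the factor applied at step k + 1, both in alt t s and in its complement alt (1 - t) (1 - s) *)
abbreviation factor :: "nat \<Rightarrow> 'v \<Rightarrow> 'v" where
  "factor k \<equiv> if even k then s else t"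

lemma factor_mem: "x \<in> V \<Longrightarrow> factor k x \<in> V"
  by (simp add: t_mem s_mem)

lemma factor_diff: "x \<in> V \<Longrightarrow> y \<in> V \<Longrightarrow> factor k (x - y) = factor k x - factor k y"
  by (simp add: t_diff s_diff)

lemma factor_idem: "x \<in> V \<Longrightarrow> factor k (factor k x) = factor k x"
  by (simp add: t_idem s_idem)

lemma neg_mem: "x \<in> V \<Longrightarrow> - x \<in> V"
  using diff_mem[OF zero_mem] by fastforce

lemma signed_mem: "x \<in> V \<Longrightarrow> signed k x \<in> V"
  by (simp add: signed_def neg_mem)

lemma factor_neg: "x \<in> V \<Longrightarrow> factor k (- x) = - factor k x"
  using factor_diff[OF zero_mem zero_mem, of k] factor_diff[OF zero_mem, of x k] by simp

lemma factor_signed: "x \<in> V \<Longrightarrow> factor k (signed j x) = signed j (factor k x)"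
  by (simp add: signed_def factor_neg)

lemma factor_add: "x \<in> V \<Longrightarrow> y \<in> V \<Longrightarrow> factor k (x + y) = factor k x + factor k y"
  using factor_diff[OF _ neg_mem, of x y k] factor_neg[of y k] by simp

lemma alt_mem:
  assumes "\<And>x. x \<in> V \<Longrightarrow> f x \<in> V" "\<And>x. x \<in> V \<Longrightarrow> g x \<in> V" "x \<in> V"
  shows "alt f g k x \<in> V"
  using assms by (induction k) auto

lemma alt_compl_mem: "x \<in> V \<Longrightarrow> alt (\<lambda>x. x - t x) (\<lambda>x. x - s x) k x \<in> V"
  by (rule alt_mem) (auto intro: diff_mem t_mem s_mem)

lemma alt_compl_Suc:
  "alt (\<lambda>x. x - t x) (\<lambda>x. x - s x) (Suc k) x
     = alt (\<lambda>x. x - t x) (\<lambda>x. x - s x) k x - factor k (alt (\<lambda>x. x - t x) (\<lambda>x. x - s x) k x)"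
  by simp

lemma factor_alt_compl_Suc:
  assumes "x \<in> V"
  shows "factor k (alt (\<lambda>x. x - t x) (\<lambda>x. x - s x) (Suc k) x) = 0"
proof -
  let ?y = "alt (\<lambda>x. x - t x) (\<lambda>x. x - s x) k x"
  have "?y \<in> V" by (rule alt_compl_mem[OF assms])
  then show ?thesis
    unfolding alt_compl_Suc by (simp only: factor_diff factor_mem factor_idem diff_self)
qed

lemma factor_alt_compl:
  assumes "x \<in> V"
  shows "factor (Suc k) (alt (\<lambda>x. x - t x) (\<lambda>x. x - s x) (Suc k) x)
     = signed k (alt s t (Suc k) x) + signed (Suc k) (alt t s (Suc (Suc k)) x)"
proof (induction k)
  case 0
  show ?case using assms by (simp add: t_diff s_mem)
next
  case (Suc k)
  let ?X = "alt (\<lambda>x. x - t x) (\<lambda>x. x - s x)"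
  have "?X (Suc k) x \<in> V" by (rule alt_compl_mem[OF assms])
  moreover have "factor (Suc (Suc k)) = factor k" by simp
  ultimately have "factor (Suc (Suc k)) (?X (Suc (Suc k)) x)
      = factor k (?X (Suc k) x) - factor k (factor (Suc k) (?X (Suc k) x))"
    unfolding alt_compl_Suc[of "Suc k"] by (simp only: factor_diff factor_mem)
  also have "\<dots> = - factor k (signed k (alt s t (Suc k) x) + signed (Suc k) (alt t s (Suc (Suc k)) x))"
    using factor_alt_compl_Suc[OF assms] Suc.IH by (simp del: alt.simps)
  also have "\<dots> = - (signed k (factor k (alt s t (Suc k) x))
                      + signed (Suc k) (factor k (alt t s (Suc (Suc k)) x)))"
    using assms by (simp only: factor_add factor_signed signed_mem alt_mem t_mem s_mem)
  also have "\<dots> = signed (Suc k) (alt s t (Suc (Suc k)) x)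
                  + signed (Suc (Suc k)) (alt t s (Suc (Suc (Suc k))) x)"
    by simp
  finally show ?case .
qed

lemma alt_compl_Suc_Suc:
  assumes "x \<in> V"
  shows "alt (\<lambda>x. x - t x) (\<lambda>x. x - s x) (Suc (Suc k)) x - signed (Suc (Suc k)) (alt t s (Suc (Suc k)) x)
       = alt (\<lambda>x. x - t x) (\<lambda>x. x - s x) (Suc k) x + signed (Suc k) (alt s t (Suc k) x)"
  unfolding alt_compl_Suc[of "Suc k"] factor_alt_compl[OF assms] by simp

lemma alt_compl_signed_symmetric:
  assumes "x \<in> V"
  shows "alt (\<lambda>x. x - t x) (\<lambda>x. x - s x) k x - signed k (alt t s k x)
       = alt (\<lambda>x. x - s x) (\<lambda>x. x - t x) k x - signed k (alt s t k x)"
proof (induction k)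
  case (Suc k)
  interpret swapped: idempotent_pair V s t by (rule swap)
  show ?case
  proof (cases k)
    case (Suc j)
    have "alt (\<lambda>x. x - t x) (\<lambda>x. x - s x) k x + signed k (alt s t k x)
        = alt (\<lambda>x. x - s x) (\<lambda>x. x - t x) k x + signed k (alt t s k x)"
      using Suc.IH by (simp add: signed_def algebra_simps)
    then show ?thesis
      using alt_compl_Suc_Suc[OF assms, of j] swapped.alt_compl_Suc_Suc[OF assms, of j] Suc by simp
  qed simp
qed simp

lemma alt_compl_commute:
  assumes "x \<in> V" and "alt t s k x = alt s t k x"
  shows "alt (\<lambda>x. x - t x) (\<lambda>x. x - s x) k x = alt (\<lambda>x. x - s x) (\<lambda>x. x - t x) k x"
  using alt_compl_signed_symmetric[OF assms(1), of k] assms(2) by simp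

end

lemma supp_wvec: "supp (wvec w :: ('x, 'k::zero_neq_one) vec) = {w}"
  by (auto simp: supp_def wvec_def)

lemma lin_wvec: "lin T (wvec w :: ('x, 'k::comm_semiring_1) vec) = T w"
  unfolding lin_def supp_wvec by (simp add: wvec_def)

lemma supp_diff_subset: "supp (x - y :: ('x, 'k::ab_group_add) vec) \<subseteq> supp x \<union> supp y"
  by (auto simp: supp_def)

lemma lin_eq_sum:
  assumes "finite F" "supp v \<subseteq> F"
  shows "lin T v u = (\<Sum>w\<in>F. v w * T w u)"
  unfolding lin_def by (rule sum.mono_neutral_left) (use assms in \<open>auto simp: supp_def\<close>)

lemma lin_diff:
  fixes x y :: "('x, 'k::comm_ring_1) vec"
  assumes "finite (supp x)" "finite (supp y)"
  shows "lin T (x - y) = lin T x - lin T y"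
proof
  fix u
  let ?F = "supp x \<union> supp y"
  have "finite ?F" using assms by simp
  then show "lin T (x - y) u = (lin T x - lin T y) u"
    using supp_diff_subset[of x y] lin_eq_sum[of ?F x T u] lin_eq_sum[of ?F y T u]
      lin_eq_sum[of ?F "x - y" T u]
    by (simp add: left_diff_distrib sum_subtractf)
qed

lemma supp_lin: "supp (lin T v) \<subseteq> (\<Union>w\<in>supp v. supp (T w))"
proof
  fix u assume "u \<in> supp (lin T v)"
  then have "(\<Sum>w\<in>supp v. v w * T w u) \<noteq> 0" by (simp add: supp_def lin_def)
  then obtain w where "w \<in> supp v" "v w * T w u \<noteq> 0" by (meson sum.neutral)
  then show "u \<in> (\<Union>w\<in>supp v. supp (T w))" by (auto simp: supp_def)
qed

lemma lin_lin:
  fixes v :: "('x, 'k::comm_semiring_1) vec"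
  assumes "finite (supp v)" "\<forall>w\<in>supp v. finite (supp (T' w))"
  shows "lin T (lin T' v) = lin (\<lambda>w. lin T (T' w)) v"
proof
  fix u
  let ?F = "\<Union>w\<in>supp v. supp (T' w)"
  have F: "finite ?F" using assms by simp
  have "lin T (lin T' v) u = (\<Sum>z\<in>?F. \<Sum>w\<in>supp v. v w * T' w z * T z u)"
    by (simp add: lin_eq_sum[OF F supp_lin]) (simp add: lin_def sum_distrib_right)
  also have "\<dots> = (\<Sum>w\<in>supp v. v w * (\<Sum>z\<in>?F. T' w z * T z u))"
    by (subst sum.swap) (simp add: sum_distrib_left mult.assoc)
  also have "\<dots> = (\<Sum>w\<in>supp v. v w * lin T (T' w) u)"
  proof (rule sum.cong[OF refl])
    fix w assume "w \<in> supp v"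
    then have "supp (T' w) \<subseteq> ?F" by auto
    then show "v w * (\<Sum>z\<in>?F. T' w z * T z u) = v w * lin T (T' w) u"
      using lin_eq_sum[OF F, of "T' w" T u] by simp
  qed
  finally show "lin T (lin T' v) u = lin (\<lambda>w. lin T (T' w)) v u"
    by (simp add: lin_def)
qed

lemma lin_idem:
  fixes v :: "('x, 'k::comm_semiring_1) vec"
  assumes "finite (supp v)" "\<forall>w\<in>supp v. finite (supp (T w)) \<and> lin T (T w) = T w"
  shows "lin T (lin T v) = lin T v"
proof -
  have "lin T (lin T v) = lin (\<lambda>w. lin T (T w)) v"
    using assms by (simp add: lin_lin)
  also have "\<dots> = lin T v"
    unfolding lin_def[of "\<lambda>w. lin T (T w)"] lin_def[of T v]
    by (intro ext sum.cong) (use assms(2) in auto)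
  finally show ?thesis .
qed

lemma lin_fixing_supp:
  fixes x :: "('x, 'k::comm_semiring_1) vec"
  assumes "finite (supp x)" "\<forall>z\<in>supp x. T z = wvec z"
  shows "lin T x = x"
proof
  fix u
  have "lin T x u = (\<Sum>z\<in>supp x. if z = u then x z else 0)"
    unfolding lin_def using assms(2) by (intro sum.cong) (auto simp: wvec_def)
  also have "\<dots> = x u" using assms(1) by (auto simp: sum.delta' supp_def)
  finally show "lin T x u = x u" .
qed

lemma tens_diff: "x \<in> tens m \<Longrightarrow> y \<in> tens m \<Longrightarrow> (x - y :: ('x, 'k::ab_group_add) vec) \<in> tens m"
  using supp_diff_subset[of x y] unfolding tens_def by (auto intro: finite_subset)

lemma zero_tens: "(0 :: ('x, 'k::zero) vec) \<in> tens m"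
  by (simp add: tens_def supp_def)

definition triangular_proj :: "('x::linorder list \<Rightarrow> ('x, 'k::comm_ring_1) vec) \<Rightarrow> 'x list \<Rightarrow> bool" where
  "triangular_proj T u \<longleftrightarrow> finite (supp (T u)) \<and> (\<forall>z\<in>supp (T u). length z = length u \<and> z \<le> u)
     \<and> (T u \<noteq> wvec u \<longrightarrow> T u u = 0) \<and> lin T (T u) = T u"

lemma triangular_projD:
  assumes "triangular_proj T u"
  shows "finite (supp (T u))" "z \<in> supp (T u) \<Longrightarrow> length z = length u"
    "z \<in> supp (T u) \<Longrightarrow> z \<le> u" "T u \<noteq> wvec u \<Longrightarrow> T u u = 0" "lin T (T u) = T u"
  using assms unfolding triangular_proj_def by blast+

lemma lin_tens:
  assumes "\<And>w. length w = m \<Longrightarrow> triangular_proj T w" "v \<in> tens m"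
  shows "lin T v \<in> tens m"
proof -
  have v: "finite (supp v)" "\<forall>w\<in>supp v. length w = m"
    using assms(2) unfolding tens_def by auto
  have "finite (\<Union>w\<in>supp v. supp (T w))"
    by (rule finite_UN_I[OF v(1)]) (use v(2) triangular_projD(1)[OF assms(1)] in blast)
  moreover have "\<forall>z\<in>(\<Union>w\<in>supp v. supp (T w)). length z = m"
  proof
    fix z assume "z \<in> (\<Union>w\<in>supp v. supp (T w))"
    then obtain w where w: "w \<in> supp v" "z \<in> supp (T w)" by blast
    then have "length w = m" using v(2) by blast
    then show "length z = m" using triangular_projD(2)[OF assms(1) w(2)] by simp
  qed
  ultimately show ?thesis
    using supp_lin[of T v] finite_subset unfolding tens_def by blast
qed

lemma idempotent_pair_lin:
  fixes T1 T2 :: "'x::linorder list \<Rightarrow> ('x, 'k::comm_ring_1) vec"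
  assumes "\<And>w. length w = m \<Longrightarrow> triangular_proj T1 w"
    and "\<And>w. length w = m \<Longrightarrow> triangular_proj T2 w"
  shows "idempotent_pair (tens m) (lin T1) (lin T2)"
proof
  fix x y :: "('x, 'k) vec"
  assume x: "x \<in> tens m"
  then have fin: "finite (supp x)" and len: "\<And>w. w \<in> supp x \<Longrightarrow> length w = m"
    unfolding tens_def by auto
  show "lin T1 x \<in> tens m" by (rule lin_tens[OF assms(1) x])
  show "lin T2 x \<in> tens m" by (rule lin_tens[OF assms(2) x])
  show "lin T1 (lin T1 x) = lin T1 x"
    by (rule lin_idem[OF fin]) (use len triangular_projD(1,5)[OF assms(1)] in blast)
  show "lin T2 (lin T2 x) = lin T2 x"
    by (rule lin_idem[OF fin]) (use len triangular_projD(1,5)[OF assms(2)] in blast)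
  assume y: "y \<in> tens m"
  show "x - y \<in> tens m" using tens_diff[OF x y] .
  show "lin T1 (x - y) = lin T1 x - lin T1 y" "lin T2 (x - y) = lin T2 x - lin T2 y"
    using x y by (simp_all add: lin_diff tens_def)
qed (rule zero_tens)

lemma opw_lm:
  assumes "reduced_presentation N R" and "f \<in> R"
  shows "opw R (lm f) = (\<lambda>u. wvec (lm f) u - f u)"
proof -
  have "g = f" if "g \<in> R" "lm g = lm f" for g
  proof (rule ccontr)
    assume "g \<noteq> f"
    then have "\<not> sublist (lm g) (lm f)"
      using assms that unfolding reduced_presentation_def by blast
    then show False using that(2) by simp
  qed
  then have "(THE g. g \<in> R \<and> lm g = lm f) = f"
    using assms(2) by (intro the_equality) auto
  then show ?thesis using assms(2) by (auto simp: opw_def)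
qed

lemma triangular_proj_opw:
  assumes red: "reduced_presentation N R"
  shows "triangular_proj (opw R) u"
proof (cases "\<exists>f\<in>R. lm f = u")
  case False
  then show ?thesis by (simp add: opw_def triangular_proj_def supp_wvec lin_wvec)
next
  case True
  then obtain f where f: "f \<in> R" "lm f = u" by auto
  have S: "opw R u = (\<lambda>v. wvec u v - f v)" using opw_lm[OF red f(1)] f(2) by simp
  have fin: "finite (supp f)" and len: "\<forall>z\<in>supp f. length z = N" and ne: "supp f \<noteq> {}"
    and one: "f u = 1"
    using red f unfolding reduced_presentation_def tens_def by auto
  have u: "u \<in> supp f" using Max_in[OF fin ne] f(2) unfolding lm_def by simp
  have le: "\<And>z. z \<in> supp f \<Longrightarrow> z \<le> u" using Max_ge[OF fin] f(2) unfolding lm_def by simp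
  have supp_S: "supp (opw R u) \<subseteq> insert u (supp f)" by (auto simp: S supp_def wvec_def)
  have "\<forall>z\<in>supp (opw R u). normal_form R z"
    using red f unfolding reduced_presentation_def S by blast
  then have fixed: "opw R z = wvec z" if "z \<in> supp (opw R u)" for z
    using that unfolding normal_form_def opw_def by (auto intro: sublist_order.order.refl)
  have "finite (supp (opw R u))" using supp_S fin finite_subset by blast
  moreover have "\<forall>z\<in>supp (opw R u). length z = length u \<and> z \<le> u"
    using supp_S len u le by fastforce
  moreover have "opw R u u = 0" using one by (simp add: S wvec_def)
  moreover have "lin (opw R) (opw R u) = opw R u"
    using calculation(1) fixed by (simp add: lin_fixing_supp)
  ultimately show ?thesis unfolding triangular_proj_def by blast
qed

lemma append_le_append_left: "y \<le> u \<Longrightarrow> p @ y \<le> p @ (u :: 'a::linorder list)"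
  unfolding list_le_def list_less_def using lexord_append_leftI by blast

lemma append_le_append_right:
  "length y = length u \<Longrightarrow> y \<le> u \<Longrightarrow> y @ b \<le> u @ (b :: 'a::linorder list)"
  unfolding list_le_def list_less_def using lexord_sufI by (metis order_refl)

lemma supp_lcat: "supp (lcat p x) = (\<lambda>y. p @ y) ` supp x"
  by (auto simp: supp_def lcat_def prefix_def)

lemma supp_rcat: "supp (rcat x b) = (\<lambda>y. y @ b) ` supp x"
  by (auto simp: supp_def rcat_def suffix_def)

lemma lcat_wvec: "lcat p (wvec u :: ('x, 'k::zero_neq_one) vec) = wvec (p @ u)"
  by (rule ext) (auto simp: lcat_def wvec_def prefix_def)

lemma rcat_wvec: "rcat (wvec u :: ('x, 'k::zero_neq_one) vec) b = wvec (u @ b)"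
  by (rule ext) (auto simp: rcat_def wvec_def suffix_def)

lemma lin_tensL_lcat:
  fixes x :: "('x, 'k::comm_semiring_1) vec"
  assumes "length p = a"
  shows "lin (tensL a S) (lcat p x) = lcat p (lin S x)"
proof
  fix u
  have "lin (tensL a S) (lcat p x) u = (\<Sum>y\<in>supp x. lcat p x (p @ y) * tensL a S (p @ y) u)"
    unfolding lin_def supp_lcat by (subst sum.reindex) (auto simp: inj_on_def)
  also have "\<dots> = lcat p (lin S x) u"
    using assms by (cases "prefix p u") (simp_all add: tensL_def lcat_def lin_def)
  finally show "lin (tensL a S) (lcat p x) u = lcat p (lin S x) u" .
qed

lemma lin_tensR_rcat:
  fixes x :: "('x, 'k::comm_semiring_1) vec"
  assumes "length b = a"
  shows "lin (tensR a S) (rcat x b) = rcat (lin S x) b"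
proof
  fix u
  have "lin (tensR a S) (rcat x b) u = (\<Sum>y\<in>supp x. rcat x b (y @ b) * tensR a S (y @ b) u)"
    unfolding lin_def supp_rcat by (subst sum.reindex) (auto simp: inj_on_def)
  also have "\<dots> = rcat (lin S x) b u"
    using assms by (cases "suffix b u") (simp_all add: tensR_def rcat_def suffix_def lin_def)
  finally show "lin (tensR a S) (rcat x b) u = rcat (lin S x) b u" .
qed

lemma triangular_proj_tensL:
  assumes S: "\<And>u. triangular_proj S u" and "a \<le> length w"
  shows "triangular_proj (tensL a S) w"
proof -
  define p u where "p = take a w" and "u = drop a w"
  have w: "w = p @ u" and "length p = a" using assms(2) by (auto simp: p_def u_def)
  have T: "tensL a S w = lcat p (S u)" by (simp add: tensL_def p_def u_def)
  note Su = triangular_projD[OF S[of u]]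
  have "z \<in> supp (lcat p (S u)) \<Longrightarrow> length z = length w \<and> z \<le> w" for z
    using Su(2,3) w by (auto simp: supp_lcat intro: append_le_append_left)
  moreover have "lcat p (S u) w = 0" if "lcat p (S u) \<noteq> wvec w"
    using that Su(4) w lcat_wvec by (fastforce simp: lcat_def)
  moreover have "lin (tensL a S) (lcat p (S u)) = lcat p (S u)"
    using lin_tensL_lcat[OF \<open>length p = a\<close>, of S "S u"] Su(5) by simp
  ultimately show ?thesis
    using Su(1) unfolding triangular_proj_def T by (simp add: supp_lcat)
qed

lemma triangular_proj_tensR:
  assumes S: "\<And>u. triangular_proj S u" and "a \<le> length w"
  shows "triangular_proj (tensR a S) w"
proof -
  define u b where "u = take (length w - a) w" and "b = drop (length w - a) w"
  have w: "w = u @ b" and "length b = a" using assms(2) by (auto simp: b_def u_def)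
  have T: "tensR a S w = rcat (S u) b" by (simp add: tensR_def b_def u_def)
  note Su = triangular_projD[OF S[of u]]
  have "z \<in> supp (rcat (S u) b) \<Longrightarrow> length z = length w \<and> z \<le> w" for z
    using Su(2,3) w by (auto simp: supp_rcat intro: append_le_append_right)
  moreover have "rcat (S u) b w = 0" if "rcat (S u) b \<noteq> wvec w"
    using that Su(4) w rcat_wvec by (fastforce simp: rcat_def)
  moreover have "lin (tensR a S) (rcat (S u) b) = rcat (S u) b"
    using lin_tensR_rcat[OF \<open>length b = a\<close>, of S "S u"] Su(5) by simp
  ultimately show ?thesis
    using Su(1) unfolding triangular_proj_def T by (simp add: supp_rcat)
qed

definition has_leading_word :: "nat \<Rightarrow> 'x::linorder list \<Rightarrow> ('x, 'k::zero) vec \<Rightarrow> bool" where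
  "has_leading_word m w x \<longleftrightarrow> x \<in> tens m \<and> x w \<noteq> 0 \<and> (\<forall>z\<in>supp x. z \<le> w)"

lemma lm_eq_if_has_leading_word: "has_leading_word m w x \<Longrightarrow> lm x = w"
  unfolding has_leading_word_def tens_def lm_def by (intro Max_eqI) (auto simp: supp_def)

lemma has_leading_word_diff_lin:
  fixes T :: "'x::linorder list \<Rightarrow> ('x, 'k::comm_ring_1) vec"
  assumes T: "\<And>y. length y = m \<Longrightarrow> triangular_proj T y" and "T w w = 0"
    and x: "has_leading_word m w x"
  shows "has_leading_word m w (x - lin T x)"
proof -
  have x_tens: "x \<in> tens m" and "x w \<noteq> 0" and below: "\<And>y. y \<in> supp x \<Longrightarrow> y \<le> w"
    using x unfolding has_leading_word_def by auto
  have len: "\<And>y. y \<in> supp x \<Longrightarrow> length y = m" using x_tens unfolding tens_def by auto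
  have "T y w = 0" if "y \<in> supp x" for y
  proof (cases "y = w")
    case False
    then have "y < w" using below[OF that] by simp
    then show ?thesis
      using triangular_projD(3)[OF T[OF len[OF that]], of w] by (force simp: supp_def dest: leD)
  qed (use \<open>T w w = 0\<close> in simp)
  then have "lin T x w = 0" unfolding lin_def by simp
  moreover have "z \<le> w" if "z \<in> supp (lin T x)" for z
  proof -
    obtain y where "y \<in> supp x" "z \<in> supp (T y)" using supp_lin \<open>z \<in> supp (lin T x)\<close> by blast
    then show "z \<le> w" using triangular_projD(3)[OF T] below len by (meson order_trans)
  qed
  ultimately show ?thesis
    using x_tens \<open>x w \<noteq> 0\<close> below supp_diff_subset[of x "lin T x"]
    unfolding has_leading_word_def by (auto intro: tens_diff lin_tens[OF T])
qed

lemma has_leading_word_alt_compl: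
  fixes T1 T2 :: "'x::linorder list \<Rightarrow> ('x, 'k::comm_ring_1) vec"
  assumes T1: "\<And>y. length y = m \<Longrightarrow> triangular_proj T1 y"
    and T2: "\<And>y. length y = m \<Longrightarrow> triangular_proj T2 y"
    and "T1 w w = 0" "T2 w w = 0" "length w = m"
  shows "has_leading_word m w (alt (\<lambda>x. x - lin T1 x) (\<lambda>x. x - lin T2 x) k (wvec w))"
proof (induction k)
  case 0
  show ?case
    using \<open>length w = m\<close> by (simp add: has_leading_word_def tens_def supp_wvec) (simp add: wvec_def)
next
  case (Suc k)
  show ?case
  proof (cases "even k")
    case True
    then show ?thesis
      using has_leading_word_diff_lin[OF T2 \<open>T2 w w = 0\<close> Suc.IH] by (simp only: alt.simps if_True comp_apply)
  next
    case False
    then show ?thesis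
      using has_leading_word_diff_lin[OF T1 \<open>T1 w w = 0\<close> Suc.IH] by (simp only: alt.simps if_False comp_apply)
  qed
qed

theorem lemma2p2p7:
  fixes R :: "('x::linorder, 'k::field) vec set" and N m :: nat
  assumes "N \<ge> 2"
    and "reduced_presentation N R"
    and "side_confluent N R"
    and "N + 1 \<le> m" and "m \<le> 2 * N - 1"
  shows "\<exists>k\<ge>1.
     (\<forall>v\<in>tens m.
        alt (\<lambda>x. x - lin (tensL (m - N) (opw R)) x) (\<lambda>x. x - lin (tensR (m - N) (opw R)) x) k v
      = alt (\<lambda>x. x - lin (tensR (m - N) (opw R)) x) (\<lambda>x. x - lin (tensL (m - N) (opw R)) x) k v)
   \<and> (\<forall>w. length w = m
        \<and> lin (tensL (m - N) (opw R)) (wvec w) \<noteq> wvec w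
        \<and> lin (tensR (m - N) (opw R)) (wvec w) \<noteq> wvec w
        \<longrightarrow> lm (alt (\<lambda>x. x - lin (tensL (m - N) (opw R)) x)
                    (\<lambda>x. x - lin (tensR (m - N) (opw R)) x) k (wvec w)) = w)"
proof -
  define a where "a = m - N"
  define T1 T2 where "T1 = tensL a (opw R)" and "T2 = tensR a (opw R)"
  have a: "1 \<le> a" "a \<le> N - 1" "a + N = m" using assms(1,4,5) by (auto simp: a_def)
  then obtain k where "k \<ge> 1" and confl: "\<forall>v\<in>tens m. alt (lin T1) (lin T2) k v = alt (lin T2) (lin T1) k v"
    using assms(3) unfolding side_confluent_def T1_def T2_def by blast
  have T1: "\<And>w. length w = m \<Longrightarrow> triangular_proj T1 w"
    and T2: "\<And>w. length w = m \<Longrightarrow> triangular_proj T2 w"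
    using a(3) triangular_proj_tensL[OF triangular_proj_opw[OF assms(2)]]
      triangular_proj_tensR[OF triangular_proj_opw[OF assms(2)]]
    unfolding T1_def T2_def by auto
  interpret idempotent_pair "tens m" "lin T1" "lin T2"
    by (rule idempotent_pair_lin[OF T1 T2])
  have "lm (alt (\<lambda>x. x - lin T1 x) (\<lambda>x. x - lin T2 x) k (wvec w)) = w"
    if "length w = m" "lin T1 (wvec w) \<noteq> wvec w" "lin T2 (wvec w) \<noteq> wvec w" for w
    using that triangular_projD(4)[OF T1] triangular_projD(4)[OF T2]
    by (intro lm_eq_if_has_leading_word has_leading_word_alt_compl[OF T1 T2]) (auto simp: lin_wvec)
  then show ?thesis
    using \<open>k \<ge> 1\<close> confl alt_compl_commute unfolding T1_def T2_def a_def by blast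
qed

end
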